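(* Let $A:\mathbb{R}^d\rightrightarrows\mathbb{R}^d$ be maximal monotone with $A^{-1}(0)\neq\emptyset$, let $p\geq1$ be an integer, $\sigma\in(0,1)$, $\theta>0$, $x_0\in\mathbb{R}^d$, and suppose $\lambda_k>0$, $y_k,v_k,x_k\in\mathbb{R}^d$, $\epsilon_k\geq0$ satisfy for every $k\geq0$: $v_{k+1}\in A^{\epsilon_{k+1}}(y_{k+1})$, $\|\lambda_{k+1}v_{k+1}+y_{k+1}-x_k\|^2+2\lambda_{k+1}\epsilon_{k+1}\leq\sigma^2\|y_{k+1}-x_k\|^2$, $\lambda_{k+1}\|y_{k+1}-x_k\|^{p-1}\geq\theta$, and $x_{k+1}=x_k-\lambda_{k+1}v_{k+1}$. Then for every integer $k\geq1$, \[ \inf_{1\leq i\leq k}\sqrt{\lambda_i}\|v_i\|\leq\sqrt{\tfrac{1+\sigma}{1-\sigma}}\Big(\sum_{i=1}^k\lambda_i\Big)^{-\frac12}\inf_{z^\star\in A^{-1}(0)}\|x_0-z^\star\|, \] \[ \inf_{1\leq i\leq k}\epsilon_i\leq\frac{\sigma^2}{2(1-\sigma^2)}\Big(\sum_{i=1}^k\lambda_i\Big)^{-1}\inf_{z^\star\in A^{-1}(0)}\|x_0-z^\star\|^2. \]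
   Context: The $\epsilon$-enlargement is $A^{\epsilon}(x)=\{v\in\mathbb{R}^d:\langle x-\tilde x,v-\tilde v\rangle\geq-\epsilon\ \forall\tilde x\in\mathbb{R}^d,\ \forall\tilde v\in A\tilde x\}$. *)

theory Defs
  imports "HOL-Analysis.Analysis"
begin

text \<open>Set-valued operators on a real inner product space are modelled as functions
  A :: 'a => 'a set; the graph of A is {(x,v). v in A x}.\<close>

definition monotone_op :: "('a::real_inner \<Rightarrow> 'a set) \<Rightarrow> bool" where
  "monotone_op A \<longleftrightarrow> (\<forall>x y u v. u \<in> A x \<longrightarrow> v \<in> A y \<longrightarrow> inner (x - y) (u - v) \<ge> 0)"

definition maximal_monotone :: "('a::real_inner \<Rightarrow> 'a set) \<Rightarrow> bool" where
  "maximal_monotone A \<longleftrightarrow> monotone_op A \<and>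
     (\<forall>B. monotone_op B \<and> (\<forall>x. A x \<subseteq> B x) \<longrightarrow> B = A)"

definition eps_enl :: "('a::real_inner \<Rightarrow> 'a set) \<Rightarrow> real \<Rightarrow> 'a \<Rightarrow> 'a set" where
  "eps_enl A \<epsilon> x = {v. \<forall>x' v'. v' \<in> A x' \<longrightarrow> inner (x - x') (v - v') \<ge> - \<epsilon>}"

definition zeros_op :: "('a::real_inner \<Rightarrow> 'a set) \<Rightarrow> 'a set" where
  "zeros_op A = {z. 0 \<in> A z}"

end

theory Submission imports Defs begin

text \<open>If z is a zero of A, the inclusion v_k \<in> A^(\<epsilon>_k)(y_k) gives
  \<langle>y_k - z, v_k\<rangle> \<ge> -\<epsilon>_k, and together with the relative error criterion this makes
  the squared distance of x_k to z drop by at least (1 - \<sigma>^2) \<parallel>y_k - x_(k-1)\<parallel>^2.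
  Telescoping bounds the sum of these residuals by \<parallel>x_0 - z\<parallel>^2 / (1 - \<sigma>^2). The error
  criterion also bounds both (\<lambda>_k \<parallel>v_k\<parallel>)^2 and 2 \<lambda>_k \<epsilon>_k by multiples of the residual,
  so the \<lambda>-weighted sums of \<lambda>_k \<parallel>v_k\<parallel>^2 and of \<epsilon>_k are bounded, and a minimum is at
  most the weighted average.\<close>

lemma hpe_step_dist_decrease:
  fixes x y v z :: "'a::real_inner"
  assumes "inner (y - z) v \<ge> - e"
    and "(norm (l *\<^sub>R v + y - x))\<^sup>2 + 2 * l * e \<le> s\<^sup>2 * (norm (y - x))\<^sup>2"
    and "l > 0"
  shows "(norm (x - l *\<^sub>R v - z))\<^sup>2 \<le> (norm (x - z))\<^sup>2 - (1 - s\<^sup>2) * (norm (y - x))\<^sup>2"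
proof -
  have expand: "(norm (x - l *\<^sub>R v - z))\<^sup>2
      = (norm (x - z))\<^sup>2 - 2 * l * inner (y - z) v + (norm (l *\<^sub>R v + y - x))\<^sup>2 - (norm (y - x))\<^sup>2"
    unfolding power2_norm_eq_inner
    by (simp add: inner_diff_left inner_diff_right inner_add_left inner_add_right
        inner_commute algebra_simps)
  have "- (l * inner (y - z) v) \<le> l * e"
    using mult_left_mono[OF assms(1), of l] assms(3) by simp
  then show ?thesis
    using expand assms(2) by (simp add: algebra_simps)
qed

lemma hpe_step_norm_le:
  fixes x y v :: "'a::real_normed_vector"
  assumes "(norm (l *\<^sub>R v + y - x))\<^sup>2 + 2 * l * e \<le> s\<^sup>2 * (norm (y - x))\<^sup>2"
    and "l > 0" "e \<ge> 0" "s \<ge> 0"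
  shows "l * norm v \<le> (1 + s) * norm (y - x)"
proof -
  have "0 \<le> 2 * l * e" using assms(2,3) by simp
  then have "(norm (l *\<^sub>R v + y - x))\<^sup>2 \<le> (s * norm (y - x))\<^sup>2"
    unfolding power_mult_distrib using assms(1) by linarith
  then have "norm (l *\<^sub>R v + y - x) \<le> s * norm (y - x)"
    using assms(4) by (simp add: power2_le_iff_abs_le)
  moreover have "norm (l *\<^sub>R v) \<le> norm (l *\<^sub>R v + y - x) + norm (y - x)"
    by (metis add_diff_cancel_right' diff_add_cancel norm_triangle_ineq4 add_diff_eq)
  ultimately show ?thesis
    using assms(2) by (simp add: algebra_simps)
qed

lemma INF_mult_sum_le:
  fixes g w :: "'b \<Rightarrow> real"
  assumes "finite I" "\<And>i. i \<in> I \<Longrightarrow> w i \<ge> 0"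
  shows "(INF i\<in>I. g i) * sum w I \<le> (\<Sum>i\<in>I. w i * g i)"
  unfolding sum_distrib_left mult.commute[of "INF i\<in>I. g i"]
  using assms by (intro sum_mono mult_left_mono cINF_lower) auto

lemma INF_power2_mult_sum_le:
  fixes g w :: "'b \<Rightarrow> real"
  assumes "finite I" "I \<noteq> {}" "\<And>i. i \<in> I \<Longrightarrow> w i \<ge> 0" "\<And>i. i \<in> I \<Longrightarrow> g i \<ge> 0"
  shows "(INF i\<in>I. g i)\<^sup>2 * sum w I \<le> (\<Sum>i\<in>I. w i * (g i)\<^sup>2)"
proof -
  have "0 \<le> (INF i\<in>I. g i)"
    using assms(2,4) by (intro cINF_greatest) auto
  moreover have "(INF i\<in>I. g i) \<le> g i" if "i \<in> I" for i
    using assms(1) that by (intro cINF_lower) auto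
  ultimately have "(INF i\<in>I. g i)\<^sup>2 \<le> (g i)\<^sup>2" if "i \<in> I" for i
    using that by (simp add: power_mono)
  then show ?thesis
    unfolding sum_distrib_left mult.commute[of "(INF i\<in>I. g i)\<^sup>2"]
    using assms(3) by (intro sum_mono mult_left_mono) auto
qed

lemma le_mult_INF:
  fixes f :: "'b \<Rightarrow> real"
  assumes "S \<noteq> {}" "c \<ge> 0" "\<And>z. z \<in> S \<Longrightarrow> f z \<ge> 0" "\<And>z. z \<in> S \<Longrightarrow> a \<le> c * f z"
  shows "a \<le> c * (INF z\<in>S. f z)"
proof (cases "c = 0")
  case True
  then show ?thesis using assms by auto
next
  case False
  with assms(2) have "c > 0" by simp
  moreover have "a / c \<le> (INF z\<in>S. f z)"
    using assms \<open>c > 0\<close> by (intro cINF_greatest) (auto simp: divide_simps mult.commute)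
  ultimately show ?thesis by (simp add: divide_simps mult.commute)
qed

lemma le_sqrt_mult_powr_of_power2_mult_le:
  fixes m d q s :: real
  assumes "m\<^sup>2 * s \<le> q * d\<^sup>2" "0 \<le> m" "0 < s" "0 \<le> d"
  shows "m \<le> sqrt q * s powr (-1/2) * d"
proof -
  have "m = sqrt (m\<^sup>2)" using assms(2) by simp
  also have "\<dots> \<le> sqrt (q * d\<^sup>2 / s)"
    using assms(1,3) by (intro real_sqrt_le_mono) (simp add: pos_le_divide_eq)
  also have "\<dots> = sqrt q * inverse (sqrt s) * d"
    using assms(4) by (simp add: real_sqrt_mult real_sqrt_divide real_sqrt_inverse divide_inverse)
  also have "inverse (sqrt s) = s powr (-1/2)"
    using assms(3) by (simp add: powr_minus powr_half_sqrt)
  finally show ?thesis .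
qed

locale hpe_sequence =
  fixes A :: "'a::real_inner \<Rightarrow> 'a set"
    and \<sigma> :: real
    and lam eps :: "nat \<Rightarrow> real"
    and x y v :: "nat \<Rightarrow> 'a"
  assumes sigma: "0 < \<sigma>" "\<sigma> < 1"
    and lam_pos: "\<And>k. lam (Suc k) > 0"
    and eps_nn: "\<And>k. eps (Suc k) \<ge> 0"
    and incl: "\<And>k. v (Suc k) \<in> eps_enl A (eps (Suc k)) (y (Suc k))"
    and err: "\<And>k. (norm (lam (Suc k) *\<^sub>R v (Suc k) + y (Suc k) - x k))\<^sup>2
                    + 2 * lam (Suc k) * eps (Suc k) \<le> \<sigma>\<^sup>2 * (norm (y (Suc k) - x k))\<^sup>2"
    and upd: "\<And>k. x (Suc k) = x k - lam (Suc k) *\<^sub>R v (Suc k)"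
begin

definition residual :: "nat \<Rightarrow> real" where
  "residual k = (norm (y (Suc k) - x k))\<^sup>2"

lemma sigma_square_less_one: "\<sigma>\<^sup>2 < 1"
  using sigma by (simp add: power_less_one_iff abs_less_iff)

lemma lam_pos_of_ge1: "k \<ge> 1 \<Longrightarrow> lam k > 0"
  using lam_pos by (cases k) auto

lemma dist_zero_decrease:
  assumes "z \<in> zeros_op A"
  shows "(norm (x (Suc k) - z))\<^sup>2 \<le> (norm (x k - z))\<^sup>2 - (1 - \<sigma>\<^sup>2) * residual k"
proof -
  have "inner (y (Suc k) - z) (v (Suc k) - 0) \<ge> - eps (Suc k)"
    using incl[of k] assms unfolding eps_enl_def zeros_op_def by blast
  from hpe_step_dist_decrease[OF _ err[of k] lam_pos[of k]] this
  show ?thesis unfolding upd residual_def by simp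
qed

lemma sum_residual_le:
  assumes "z \<in> zeros_op A"
  shows "(1 - \<sigma>\<^sup>2) * (\<Sum>i<k. residual i) \<le> (norm (x 0 - z))\<^sup>2"
proof -
  have "(1 - \<sigma>\<^sup>2) * (\<Sum>i<k. residual i) \<le> (norm (x 0 - z))\<^sup>2 - (norm (x k - z))\<^sup>2"
  proof (induction k)
    case (Suc k)
    then show ?case
      using dist_zero_decrease[OF assms, of k] by (simp add: algebra_simps)
  qed simp
  then show ?thesis using zero_le_power2[of "norm (x k - z)"] by linarith
qed

lemma lam_norm_v_le: "(lam (Suc k) * norm (v (Suc k)))\<^sup>2 \<le> (1 + \<sigma>)\<^sup>2 * residual k"
proof -
  have "lam (Suc k) * norm (v (Suc k)) \<le> (1 + \<sigma>) * norm (y (Suc k) - x k)"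
    using hpe_step_norm_le[OF err lam_pos eps_nn] sigma by simp
  then show ?thesis
    unfolding residual_def power_mult_distrib[symmetric]
    using lam_pos[of k] by (intro power_mono) auto
qed

lemma lam_eps_le: "lam (Suc k) * eps (Suc k) \<le> \<sigma>\<^sup>2 / 2 * residual k"
  using err[of k] zero_le_power2[of "norm (lam (Suc k) *\<^sub>R v (Suc k) + y (Suc k) - x k)"]
  unfolding residual_def by linarith

lemma INF_sqrt_lam_norm_v_bound:
  assumes "k \<ge> 1" "z \<in> zeros_op A"
  shows "(INF i\<in>{1..k}. sqrt (lam i) * norm (v i))\<^sup>2 * (\<Sum>i=1..k. lam i)
           \<le> (1 + \<sigma>) / (1 - \<sigma>) * (norm (x 0 - z))\<^sup>2"
proof -
  have "(INF i\<in>{1..k}. sqrt (lam i) * norm (v i))\<^sup>2 * (\<Sum>i=1..k. lam i)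
          \<le> (\<Sum>i=1..k. lam i * (sqrt (lam i) * norm (v i))\<^sup>2)"
    using assms(1) less_imp_le[OF lam_pos_of_ge1] by (intro INF_power2_mult_sum_le) auto
  also have "\<dots> = (\<Sum>i<k. (lam (Suc i) * norm (v (Suc i)))\<^sup>2)"
    using lam_pos[THEN less_imp_le]
    by (simp add: sum.atLeast1_atMost_eq power_mult_distrib power2_eq_square[of "lam _"] mult.assoc)
  also have "\<dots> \<le> (1 + \<sigma>)\<^sup>2 * (\<Sum>i<k. residual i)"
    unfolding sum_distrib_left by (intro sum_mono lam_norm_v_le)
  also have "\<dots> = (1 + \<sigma>) / (1 - \<sigma>) * ((1 - \<sigma>\<^sup>2) * (\<Sum>i<k. residual i))"
    using sigma by (simp add: field_simps power2_eq_square)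
  also have "\<dots> \<le> (1 + \<sigma>) / (1 - \<sigma>) * (norm (x 0 - z))\<^sup>2"
    using sigma sum_residual_le[OF assms(2)] by (intro mult_left_mono) auto
  finally show ?thesis .
qed

lemma INF_eps_bound:
  assumes "z \<in> zeros_op A"
  shows "(INF i\<in>{1..k}. eps i) * (\<Sum>i=1..k. lam i)
           \<le> \<sigma>\<^sup>2 / (2 * (1 - \<sigma>\<^sup>2)) * (norm (x 0 - z))\<^sup>2"
proof -
  have "(INF i\<in>{1..k}. eps i) * (\<Sum>i=1..k. lam i) \<le> (\<Sum>i=1..k. lam i * eps i)"
    using less_imp_le[OF lam_pos_of_ge1] by (intro INF_mult_sum_le) auto
  also have "\<dots> = (\<Sum>i<k. lam (Suc i) * eps (Suc i))"
    by (simp add: sum.atLeast1_atMost_eq)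
  also have "\<dots> \<le> \<sigma>\<^sup>2 / 2 * (\<Sum>i<k. residual i)"
    unfolding sum_distrib_left by (intro sum_mono lam_eps_le)
  also have "\<dots> = \<sigma>\<^sup>2 / (2 * (1 - \<sigma>\<^sup>2)) * ((1 - \<sigma>\<^sup>2) * (\<Sum>i<k. residual i))"
    using sigma_square_less_one by (simp add: field_simps)
  also have "\<dots> \<le> \<sigma>\<^sup>2 / (2 * (1 - \<sigma>\<^sup>2)) * (norm (x 0 - z))\<^sup>2"
    using sigma_square_less_one sum_residual_le[OF assms] by (intro mult_left_mono) auto
  finally show ?thesis .
qed

end

theorem lemma4p2:
  fixes A :: "real ^ 'd \<Rightarrow> (real ^ 'd) set"
    and p :: nat and \<sigma> \<theta> :: real
    and lam eps :: "nat \<Rightarrow> real"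
    and x y v :: "nat \<Rightarrow> real ^ 'd"
  assumes mm: "maximal_monotone A"
    and nz: "zeros_op A \<noteq> {}"
    and p: "p \<ge> 1"
    and sigma: "0 < \<sigma>" "\<sigma> < 1"
    and theta: "\<theta> > 0"
    and lam_pos: "\<And>k. lam (Suc k) > 0"
    and eps_nn: "\<And>k. eps (Suc k) \<ge> 0"
    and incl: "\<And>k. v (Suc k) \<in> eps_enl A (eps (Suc k)) (y (Suc k))"
    and err: "\<And>k. (norm (lam (Suc k) *\<^sub>R v (Suc k) + y (Suc k) - x k))\<^sup>2
                    + 2 * lam (Suc k) * eps (Suc k) \<le> \<sigma>\<^sup>2 * (norm (y (Suc k) - x k))\<^sup>2"
    and large: "\<And>k. lam (Suc k) * norm (y (Suc k) - x k) ^ (p - 1) \<ge> \<theta>"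
    and upd: "\<And>k. x (Suc k) = x k - lam (Suc k) *\<^sub>R v (Suc k)"
    and k: "k \<ge> 1"
  shows "((INF i\<in>{1..k}. sqrt (lam i) * norm (v i))
           \<le> sqrt ((1 + \<sigma>) / (1 - \<sigma>)) * (\<Sum>i=1..k. lam i) powr (-1/2)
             * (INF z\<in>zeros_op A. norm (x 0 - z)))
       \<and> ((INF i\<in>{1..k}. eps i)
           \<le> \<sigma>\<^sup>2 / (2 * (1 - \<sigma>\<^sup>2)) * inverse (\<Sum>i=1..k. lam i)
             * (INF z\<in>zeros_op A. (norm (x 0 - z))\<^sup>2))"
proof -
  interpret hpe_sequence A \<sigma> lam eps x y v
    using sigma lam_pos eps_nn incl err upd by unfold_locales
  have sum_lam_pos: "(\<Sum>i=1..k. lam i) > 0"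
    using k lam_pos_of_ge1 by (intro sum_pos) auto
  have INF_v_nn: "0 \<le> (INF i\<in>{1..k}. sqrt (lam i) * norm (v i))"
    using k less_imp_le[OF lam_pos_of_ge1] by (intro cINF_greatest) auto
  show ?thesis
  proof
    show "(INF i\<in>{1..k}. sqrt (lam i) * norm (v i))
        \<le> sqrt ((1 + \<sigma>) / (1 - \<sigma>)) * (\<Sum>i=1..k. lam i) powr (-1/2)
          * (INF z\<in>zeros_op A. norm (x 0 - z))"
      using nz sigma sum_lam_pos INF_v_nn INF_sqrt_lam_norm_v_bound[OF k]
      by (intro le_mult_INF le_sqrt_mult_powr_of_power2_mult_le) auto
    show "(INF i\<in>{1..k}. eps i)
        \<le> \<sigma>\<^sup>2 / (2 * (1 - \<sigma>\<^sup>2)) * inverse (\<Sum>i=1..k. lam i)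
          * (INF z\<in>zeros_op A. (norm (x 0 - z))\<^sup>2)"
      using nz sigma_square_less_one sum_lam_pos INF_eps_bound
      by (intro le_mult_INF) (auto simp: field_simps)
  qed
qed

end
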